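(* Let $\mathcal Q=(\mathcal G,\mathcal C)$ be a CWS code in standard form with $K=|\mathcal C|\ge2$ and distance $d$. Let $(\mathcal G',\mathcal C')$ be any CWS code in standard form that is LC-equivalent to $\mathcal Q$ (in particular $(\mathcal G',\mathcal C')=(\mathcal G,\mathcal C)$ is allowed), and let $S'_i=X_iZ^{\mathbf r'_i}$ be the graph-stabilizer generators of $\mathcal G'$. Then $d$ is at most the $d$-th largest of the numbers $\mathrm{wgt}(S'_1),\dots,\mathrm{wgt}(S'_n)$ (where $\mathrm{wgt}(S'_i)=1+\deg_{\mathcal G'}(i)$). In other words, $d$ is bounded by the $d$-th largest weight of the $S_i$, minimized over all such graphs $\mathcal G'$ (which range over graphs locally equivalent to $\mathcal G$).
   Context: A Pauli operator on $n$ qubits is, up to a phase, $X^{\mathbf v}Z^{\mathbf u}=X_1^{v_1}\cdots X_n^{v_n}Z_1^{u_1}\cdots Z_n^{u_n}$ with $\mathbf v,\mathbf u\in\{0,1\}^n$; its weight is the number of qubits on which it acts as a non-identity operator. For a subspace $\mathcal Q\subseteq(\mathbb C^2)^{\otimes n}$ with orthonormal basis $\{|i\rangle\}$, a Pauli operator $E$ is detectable if $\langle j|E|i\rangle=C_E\delta_{ij}$ for all $i,j$, with $C_E$ independent of $i,j$; the distance of $\mathcal Q$ is the smallest weight of a non-detectable Pauli operator. Let $\mathcal G$ be a simple graph on vertex set $\{1,\dots,n\}$ with adjacency matrix $R\in\{0,1\}^{n\times n}$ (symmetric, zero diagonal) and rows $\mathbf r_i$. The graph-stabilizer generators are $S_i=X_iZ^{\mathbf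 r_i}$, $i=1,\dots,n$; they commute, generate an abelian group $\mathscr S_{\mathcal G}$, and stabilize a unique (up to phase) state $|s\rangle$, the graph state. For a binary code $\mathcal C\subseteq\{0,1\}^n$ with $K$ words, the CWS code in standard form is $\mathcal Q=(\mathcal G,\mathcal C)=\operatorname{span}\{Z^{\mathbf c}|s\rangle:\mathbf c\in\mathcal C\}$; it has dimension $K$. Two quantum codes are LC-equivalent if one is mapped onto the other by a qubit permutation followed by a tensor product of single-qubit Clifford unitaries; LC-equivalent codes have equal distance. Two graphs are locally equivalent if one is obtained from the other by a sequence of local complementations (replacing the subgraph induced on the neighbourhood of a vertex by its complement) and graph isomorphisms. *)

theory Defs
  imports Complex_Main
begin

text \<open>Qubits are indexed 0..n-1. A computational basis label is a bit string
  x :: nat => bool with x k = False for k >= n. A state of n qubits is a function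
  from bit strings to complex amplitudes (zero outside the basis labels).\<close>

type_synonym bits = "nat \<Rightarrow> bool"
type_synonym state = "bits \<Rightarrow> complex"

definition bitstrs :: "nat \<Rightarrow> bits set" where
  "bitstrs n = {x. \<forall>k\<ge>n. \<not> x k}"

definition bxor :: "bits \<Rightarrow> bits \<Rightarrow> bits" where
  "bxor x y = (\<lambda>k. x k \<noteq> y k)"

definition bdot :: "nat \<Rightarrow> bits \<Rightarrow> bits \<Rightarrow> nat" where
  "bdot n u x = card {k. k < n \<and> u k \<and> x k}"

definition unitv :: "nat \<Rightarrow> bits" where
  "unitv i = (\<lambda>k. k = i)"

definition zerov :: bits where
  "zerov = (\<lambda>k. False)"

definition qinner :: "nat \<Rightarrow> state \<Rightarrow> state \<Rightarrow> complex" where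
  "qinner n \<phi> \<psi> = (\<Sum>x\<in>bitstrs n. cnj (\<phi> x) * \<psi> x)"

text \<open>The Pauli operator X^v Z^u: X^v Z^u |y> = (-1)^(u.y) |y + v>.\<close>
definition pauli :: "nat \<Rightarrow> bits \<Rightarrow> bits \<Rightarrow> state \<Rightarrow> state" where
  "pauli n v u \<psi> = (\<lambda>x. (-1::complex) ^ bdot n u (bxor x v) * \<psi> (bxor x v))"

definition pweight :: "nat \<Rightarrow> bits \<Rightarrow> bits \<Rightarrow> nat" where
  "pweight n v u = card {k. k < n \<and> (v k \<or> u k)}"

text \<open>Detectability of an operator E for a subspace Q (Knill--Laflamme form):
  <phi|E|psi> = C_E <phi|psi> for all phi, psi in Q.\<close>
definition detectable :: "nat \<Rightarrow> state set \<Rightarrow> (state \<Rightarrow> state) \<Rightarrow> bool" where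
  "detectable n Q E = (\<exists>C. \<forall>\<phi>\<in>Q. \<forall>\<psi>\<in>Q. qinner n \<phi> (E \<psi>) = C * qinner n \<phi> \<psi>)"

definition qdistance :: "nat \<Rightarrow> state set \<Rightarrow> nat" where
  "qdistance n Q = (LEAST w. \<exists>v\<in>bitstrs n. \<exists>u\<in>bitstrs n.
      pweight n v u = w \<and> \<not> detectable n Q (pauli n v u))"

definition simple_graph :: "nat \<Rightarrow> (nat \<Rightarrow> nat \<Rightarrow> bool) \<Rightarrow> bool" where
  "simple_graph n R = (\<forall>i j. R i j \<longrightarrow> i < n \<and> j < n \<and> i \<noteq> j \<and> R j i)"

definition adjrow :: "nat \<Rightarrow> (nat \<Rightarrow> nat \<Rightarrow> bool) \<Rightarrow> nat \<Rightarrow> bits" where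
  "adjrow n R i = (\<lambda>j. j < n \<and> R i j)"

definition graph_stab :: "nat \<Rightarrow> (nat \<Rightarrow> nat \<Rightarrow> bool) \<Rightarrow> nat \<Rightarrow> state \<Rightarrow> state" where
  "graph_stab n R i = pauli n (unitv i) (adjrow n R i)"

definition is_graph_state :: "nat \<Rightarrow> (nat \<Rightarrow> nat \<Rightarrow> bool) \<Rightarrow> state \<Rightarrow> bool" where
  "is_graph_state n R s = ((\<forall>x. x \<notin> bitstrs n \<longrightarrow> s x = 0) \<and> (\<exists>x. s x \<noteq> 0)
      \<and> (\<forall>i<n. graph_stab n R i s = s))"

definition cws_code :: "nat \<Rightarrow> state \<Rightarrow> bits set \<Rightarrow> state set" where
  "cws_code n s C = {\<psi>. \<exists>a :: bits \<Rightarrow> complex.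
      \<psi> = (\<lambda>x. \<Sum>c\<in>C. a c * pauli n zerov c s x)}"

type_synonym mat2 = "bool \<Rightarrow> bool \<Rightarrow> complex"

definition mmul2 :: "mat2 \<Rightarrow> mat2 \<Rightarrow> mat2" where
  "mmul2 A B = (\<lambda>i j. \<Sum>k\<in>UNIV. A i k * B k j)"

definition adj2 :: "mat2 \<Rightarrow> mat2" where
  "adj2 A = (\<lambda>i j. cnj (A j i))"

definition id2 :: mat2 where
  "id2 = (\<lambda>i j. if i = j then 1 else 0)"

text \<open>Single-qubit Pauli matrix X^a Z^b (index False = |0>, True = |1>).\<close>
definition pmat :: "bool \<Rightarrow> bool \<Rightarrow> mat2" where
  "pmat a b = (\<lambda>i j. if i = (j \<noteq> a) then (if b \<and> j then -1 else 1) else 0)"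

definition unitary2 :: "mat2 \<Rightarrow> bool" where
  "unitary2 U = (mmul2 U (adj2 U) = id2)"

definition clifford1 :: "mat2 \<Rightarrow> bool" where
  "clifford1 U = (unitary2 U \<and> (\<forall>a b. \<exists>c a' b'.
      mmul2 (mmul2 U (pmat a b)) (adj2 U) = (\<lambda>i j. c * pmat a' b' i j)))"

definition local_op :: "nat \<Rightarrow> (nat \<Rightarrow> mat2) \<Rightarrow> state \<Rightarrow> state" where
  "local_op n U \<psi> = (\<lambda>x. if x \<in> bitstrs n then
      (\<Sum>y\<in>bitstrs n. (\<Prod>k<n. U k (x k) (y k)) * \<psi> y) else 0)"

definition perm_state :: "(nat \<Rightarrow> nat) \<Rightarrow> state \<Rightarrow> state" where
  "perm_state \<pi> \<psi> = (\<lambda>x. \<psi> (x \<circ> \<pi>))"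

definition qubit_perm :: "nat \<Rightarrow> (nat \<Rightarrow> nat) \<Rightarrow> bool" where
  "qubit_perm n \<pi> = (bij_betw \<pi> {0..<n} {0..<n} \<and> (\<forall>k\<ge>n. \<pi> k = k))"

definition lc_equiv :: "nat \<Rightarrow> state set \<Rightarrow> state set \<Rightarrow> bool" where
  "lc_equiv n Q Q' = (\<exists>\<pi> U. qubit_perm n \<pi> \<and> (\<forall>k<n. clifford1 (U k)) \<and>
      Q' = (\<lambda>\<psi>. local_op n U (perm_state \<pi> \<psi>)) ` Q)"

definition kth_largest :: "nat list \<Rightarrow> nat \<Rightarrow> nat" where
  "kth_largest ws d = rev (sort ws) ! (d - 1)"

end

theory Submission
  imports Defs
begin

text \<open>
  Let d be the distance of Q = (G, C) and let Q' = (G', C') be LC-equivalent to Q.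
  (1) A local Clifford unitary followed by a qubit permutation conjugates every Pauli operator
      into a nonzero multiple of a Pauli operator of the same weight, and it is an isometry.
      Hence a non-detectable Pauli of weight w for Q' yields one of weight w for Q, so d is at
      most the weight of any Pauli that is not detectable on Q'.
  (2) Isometries preserve orthogonality, so Q' contains two orthogonal nonzero vectors and C'
      has two distinct words c1, c2.
  (3) Z^c|s'> is an eigenvector of S'_i with eigenvalue (-1)^(c_i).  If wgt(S'_i) < d, then S'_i
      is detectable on Q' by (1), which forces c1_i = c2_i.
  (4) Z^(c1+c2) maps Z^c1|s'> to the orthogonal vector Z^c2|s'>, so it is not detectable on Q';
      by (1) and (3), d <= wgt(c1+c2) <= #{i. d <= wgt(S'_i)}, i.e. d is at most the d-th
      largest stabilizer weight.
\<close>

section \<open>Bit strings and signs\<close>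

lemma finite_bitstrs: "finite (bitstrs n)"
proof -
  have "inj_on (\<lambda>x. {k. x k}) (bitstrs n)"
    by (auto simp: inj_on_def set_eq_iff fun_eq_iff)
  moreover have "(\<lambda>x. {k. x k}) ` bitstrs n \<subseteq> Pow {..<n}"
    by (auto simp: bitstrs_def) (meson not_less)
  ultimately show ?thesis
    by (meson finite_Pow_iff finite_lessThan finite_subset inj_on_finite)
qed

lemma sign_bdot_prod: "(-1::complex) ^ bdot n u x = (\<Prod>k<n. if u k \<and> x k then -1 else 1)"
proof -
  have "(\<Prod>k<n. if u k \<and> x k then -1 else (1::complex)) =
     (\<Prod>k\<in>{k. k < n \<and> u k \<and> x k}. -1)"
    by (subst prod.If_cases) (simp_all add: Int_def lessThan_def conj_assoc)
  also have "\<dots> = (-1) ^ bdot n u x" by (simp add: bdot_def)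
  finally show ?thesis by simp
qed

lemma sign_bdot_bxor_right:
  "(-1::complex) ^ bdot n u (bxor x y) = (-1) ^ bdot n u x * (-1) ^ bdot n u y"
  unfolding sign_bdot_prod prod.distrib[symmetric] by (rule prod.cong) (auto simp: bxor_def)

lemma bdot_comm: "bdot n u x = bdot n x u"
  unfolding bdot_def by (rule arg_cong[where f=card]) auto

lemma sign_bdot_bxor_left:
  "(-1::complex) ^ bdot n (bxor c c') x = (-1) ^ bdot n c x * (-1) ^ bdot n c' x"
  by (metis sign_bdot_bxor_right bdot_comm)

lemma sign_bdot_unitv:
  assumes "i < n" shows "(-1::complex) ^ bdot n u (unitv i) = (if u i then -1 else 1)"
proof -
  have "{k. k < n \<and> u k \<and> unitv i k} = (if u i then {i} else {})"
    using assms by (auto simp: unitv_def)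
  then show ?thesis by (simp add: bdot_def)
qed

lemma sign_square: "(-1::complex) ^ k * (-1) ^ k = 1"
  by (simp flip: power_mult_distrib)

lemma bxor_bxor [simp]: "bxor (bxor x v) v = x" by (auto simp: bxor_def fun_eq_iff)

lemma bxor_zerov [simp]: "bxor x zerov = x" by (simp add: bxor_def zerov_def)

lemma bxor_in: "x \<in> bitstrs n \<Longrightarrow> v \<in> bitstrs n \<Longrightarrow> bxor x v \<in> bitstrs n"
  by (simp add: bxor_def bitstrs_def)

lemma bxor_notin: "x \<notin> bitstrs n \<Longrightarrow> v \<in> bitstrs n \<Longrightarrow> bxor x v \<notin> bitstrs n"
  by (auto simp: bxor_def bitstrs_def)

lemma unitv_in: "i < n \<Longrightarrow> unitv i \<in> bitstrs n" by (simp add: unitv_def bitstrs_def)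

lemma zerov_in: "zerov \<in> bitstrs n" by (simp add: zerov_def bitstrs_def)

lemma adjrow_in: "adjrow n R i \<in> bitstrs n" by (simp add: adjrow_def bitstrs_def)

lemma bitstrs_Suc: "bitstrs (Suc n) = bitstrs n \<union> (\<lambda>z. z(n:=True)) ` bitstrs n"
proof -
  have "x \<in> (\<lambda>z. z(n:=True)) ` bitstrs n" if x: "x \<in> bitstrs (Suc n)" "x \<notin> bitstrs n" for x
  proof -
    from x obtain k where k: "k \<ge> n" "x k" by (auto simp: bitstrs_def)
    with x(1) have "x n" unfolding bitstrs_def by (metis Suc_leI le_neq_implies_less mem_Collect_eq)
    with x have "x = (x(n:=False))(n:=True)" "x(n:=False) \<in> bitstrs n"
      by (auto simp: bitstrs_def fun_eq_iff le_Suc_eq)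
    then show ?thesis by blast
  qed
  then show ?thesis by (auto simp: bitstrs_def)
qed

lemma sum_bitstrs_prod:
  "(\<Sum>z\<in>bitstrs n. \<Prod>k<n. f k (z k)) = (\<Prod>k<n. (f k False + f k True :: 'a::comm_semiring_1))"
proof (induction n)
  case 0
  have "bitstrs 0 = {zerov}" by (auto simp: bitstrs_def zerov_def)
  then show ?case by simp
next
  case (Suc n)
  have disj: "bitstrs n \<inter> (\<lambda>z. z(n:=True)) ` bitstrs n = {}"
    by (auto simp: bitstrs_def)
  have inj: "inj_on (\<lambda>z. z(n:=True)) (bitstrs n)"
    by (auto simp: inj_on_def bitstrs_def fun_eq_iff)
  have upd: "(\<Prod>k<n. f k ((z(n:=b)) k)) = (\<Prod>k<n. f k (z k))" for z b
    by (rule prod.cong) auto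
  have top: "z \<in> bitstrs n \<Longrightarrow> z n = False" for z by (simp add: bitstrs_def)
  have "(\<Sum>z\<in>bitstrs (Suc n). \<Prod>k<Suc n. f k (z k)) =
     (\<Sum>z\<in>bitstrs n. \<Prod>k<Suc n. f k (z k)) + (\<Sum>z\<in>bitstrs n. \<Prod>k<Suc n. f k ((z(n:=True)) k))"
    unfolding bitstrs_Suc using disj inj finite_bitstrs
    by (simp add: sum.union_disjoint sum.reindex)
  also have "\<dots> = (\<Sum>z\<in>bitstrs n. (\<Prod>k<n. f k (z k)) * f n False)
                 + (\<Sum>z\<in>bitstrs n. (\<Prod>k<n. f k (z k)) * f n True)"
    by (intro arg_cong2[where f="(+)"] sum.cong refl)
       (simp_all only: prod.lessThan_Suc upd fun_upd_same top)
  also have "\<dots> = (\<Prod>k<Suc n. (f k False + f k True))"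
    by (simp add: Suc.IH sum_distrib_right[symmetric] distrib_left)
  finally show ?case .
qed

section \<open>States and operators given by kernels\<close>

definition supp :: "nat \<Rightarrow> state \<Rightarrow> bool" where
  "supp n \<psi> = (\<forall>x. x \<notin> bitstrs n \<longrightarrow> \<psi> x = 0)"

definition kop :: "nat \<Rightarrow> (bits \<Rightarrow> bits \<Rightarrow> complex) \<Rightarrow> state \<Rightarrow> state" where
  "kop n K \<psi> = (\<lambda>x. if x \<in> bitstrs n then \<Sum>y\<in>bitstrs n. K x y * \<psi> y else 0)"

definition tens :: "nat \<Rightarrow> (nat \<Rightarrow> mat2) \<Rightarrow> bits \<Rightarrow> bits \<Rightarrow> complex" where
  "tens n A = (\<lambda>x y. \<Prod>k<n. A k (x k) (y k))"

definition smul2 :: "complex \<Rightarrow> mat2 \<Rightarrow> mat2" where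
  "smul2 c A = (\<lambda>i j. c * A i j)"

lemma qinner_smul_right: "qinner n \<phi> (\<lambda>x. c * f x) = c * qinner n \<phi> f"
  by (simp add: qinner_def sum_distrib_left mult_ac)

lemma qinner_smul_left: "qinner n (\<lambda>x. b * f x) g = cnj b * qinner n f g"
  by (simp add: qinner_def sum_distrib_left mult_ac)

lemma kop_supp: "supp n (kop n K \<psi>)" by (simp add: supp_def kop_def)

lemma kop_comp: "kop n K (kop n M \<psi>) = kop n (\<lambda>x y. \<Sum>z\<in>bitstrs n. K x z * M z y) \<psi>"
proof -
  have "(\<Sum>z\<in>bitstrs n. K x z * (\<Sum>y\<in>bitstrs n. M z y * \<psi> y)) =
        (\<Sum>y\<in>bitstrs n. (\<Sum>z\<in>bitstrs n. K x z * M z y) * \<psi> y)" for x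
    by (simp add: sum_distrib_left sum_distrib_right mult.assoc) (rule sum.swap)
  then show ?thesis by (simp add: kop_def fun_eq_iff cong: if_cong)
qed

lemma kop_smul: "kop n (\<lambda>x y. c * K x y) \<psi> = (\<lambda>x. c * kop n K \<psi> x)"
  by (simp add: kop_def fun_eq_iff sum_distrib_left mult.assoc)

lemma qinner_kop: "qinner n (kop n K \<phi>) \<chi> = qinner n \<phi> (kop n (\<lambda>x y. cnj (K y x)) \<chi>)"
proof -
  have "qinner n (kop n K \<phi>) \<chi> =
      (\<Sum>x\<in>bitstrs n. \<Sum>y\<in>bitstrs n. cnj (\<phi> y) * (cnj (K x y) * \<chi> x))"
    by (simp add: qinner_def kop_def sum_distrib_right sum_distrib_left mult_ac)
  also have "\<dots> = (\<Sum>y\<in>bitstrs n. \<Sum>x\<in>bitstrs n. cnj (\<phi> y) * (cnj (K x y) * \<chi> x))"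
    by (rule sum.swap)
  also have "\<dots> = qinner n \<phi> (kop n (\<lambda>x y. cnj (K y x)) \<chi>)"
    by (simp add: qinner_def kop_def sum_distrib_left)
  finally show ?thesis .
qed

lemma tens_cong: "(\<And>k. k < n \<Longrightarrow> A k = A' k) \<Longrightarrow> tens n A = tens n A'"
  by (simp add: tens_def)

lemma tens_comp:
  "(\<Sum>z\<in>bitstrs n. tens n A x z * tens n M z y) = tens n (\<lambda>k. mmul2 (A k) (M k)) x y"
proof -
  have "(\<Sum>z\<in>bitstrs n. tens n A x z * tens n M z y) =
     (\<Sum>z\<in>bitstrs n. \<Prod>k<n. (\<lambda>k b. A k (x k) b * M k b (y k)) k (z k))"
    by (simp add: tens_def prod.distrib)
  also have "\<dots> = tens n (\<lambda>k. mmul2 (A k) (M k)) x y"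
    by (subst sum_bitstrs_prod) (simp add: tens_def mmul2_def UNIV_bool)
  finally show ?thesis .
qed

lemma tens_id:
  assumes "x \<in> bitstrs n" "y \<in> bitstrs n"
  shows "tens n (\<lambda>k. id2) x y = (if x = y then 1 else 0)"
proof (cases "x = y")
  case True then show ?thesis by (simp add: tens_def id2_def)
next
  case False
  then obtain k where k: "x k \<noteq> y k" by auto
  with assms have "k < n" by (auto simp: bitstrs_def) (meson not_less)
  with k False show ?thesis by (auto simp: tens_def id2_def intro!: prod_zero)
qed

lemma kop_id:
  assumes "supp n \<psi>" shows "kop n (tens n (\<lambda>k. id2)) \<psi> = \<psi>"
proof -
  have "(\<Sum>y\<in>bitstrs n. tens n (\<lambda>k. id2) x y * \<psi> y) = \<psi> x" if x: "x \<in> bitstrs n" for x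
  proof -
    have "(\<Sum>y\<in>bitstrs n. tens n (\<lambda>k. id2) x y * \<psi> y) = (\<Sum>y\<in>bitstrs n. if x = y then \<psi> y else 0)"
      using x by (intro sum.cong) (simp_all add: tens_id)
    also have "\<dots> = \<psi> x" using x by (simp add: finite_bitstrs)
    finally show ?thesis .
  qed
  with assms show ?thesis by (auto simp: kop_def supp_def fun_eq_iff)
qed

lemma tens_smul: "tens n (\<lambda>k. smul2 (c k) (A k)) x y = (\<Prod>k<n. c k) * tens n A x y"
  by (simp add: tens_def smul2_def prod.distrib)

lemma tens_adj: "cnj (tens n U y x) = tens n (\<lambda>k. adj2 (U k)) x y"
  by (simp add: tens_def adj2_def)

lemma local_op_kop: "local_op n U = kop n (tens n U)"
  by (simp add: local_op_def kop_def tens_def fun_eq_iff)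

lemma local_op_isometry:
  assumes unitary: "\<And>k. k < n \<Longrightarrow> mmul2 (adj2 (U k)) (U k) = id2" and "supp n \<psi>"
  shows "qinner n (local_op n U \<phi>) (local_op n U \<psi>) = qinner n \<phi> \<psi>"
proof -
  have "qinner n (local_op n U \<phi>) (local_op n U \<psi>) =
     qinner n \<phi> (kop n (\<lambda>x y. \<Sum>z\<in>bitstrs n. tens n (\<lambda>k. adj2 (U k)) x z * tens n U z y) \<psi>)"
    by (simp add: local_op_kop qinner_kop tens_adj kop_comp)
  also have "\<dots> = qinner n \<phi> (kop n (tens n (\<lambda>k. id2)) \<psi>)"
    by (simp add: tens_comp unitary tens_cong[of n "\<lambda>k. mmul2 (adj2 (U k)) (U k)" "\<lambda>k. id2"])
  also have "\<dots> = qinner n \<phi> \<psi>" using assms(2) by (simp add: kop_id)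
  finally show ?thesis .
qed

lemma tens_pauli:
  assumes "x \<in> bitstrs n" "y \<in> bitstrs n" "v \<in> bitstrs n"
  shows "tens n (\<lambda>k. pmat (v k) (u k)) x y = (if y = bxor x v then (-1) ^ bdot n u y else 0)"
proof (cases "y = bxor x v")
  case True then show ?thesis
    unfolding tens_def sign_bdot_prod by (simp, intro prod.cong) (auto simp: pmat_def bxor_def)
next
  case False
  then obtain k where k: "y k \<noteq> (x k \<noteq> v k)" by (auto simp: bxor_def)
  with assms have "k < n" by (auto simp: bitstrs_def) (meson not_less)+
  with k False show ?thesis by (auto simp: tens_def pmat_def intro!: prod_zero)
qed

lemma pauli_kop:
  assumes s: "supp n \<psi>" and v: "v \<in> bitstrs n"
  shows "pauli n v u \<psi> = kop n (tens n (\<lambda>k. pmat (v k) (u k))) \<psi>"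
proof
  fix x
  show "pauli n v u \<psi> x = kop n (tens n (\<lambda>k. pmat (v k) (u k))) \<psi> x"
  proof (cases "x \<in> bitstrs n")
    case True
    have "(\<Sum>y\<in>bitstrs n. tens n (\<lambda>k. pmat (v k) (u k)) x y * \<psi> y) =
          (\<Sum>y\<in>bitstrs n. if y = bxor x v then (-1) ^ bdot n u y * \<psi> y else 0)"
      using True v by (intro sum.cong) (simp_all add: tens_pauli)
    also have "\<dots> = (-1) ^ bdot n u (bxor x v) * \<psi> (bxor x v)"
      using True v by (simp add: finite_bitstrs bxor_in)
    finally show ?thesis using True by (simp add: pauli_def kop_def)
  next
    case False
    then show ?thesis using s v bxor_notin[OF False v] by (simp add: pauli_def kop_def supp_def)
  qed
qed

lemma pauli_supp: "supp n \<psi> \<Longrightarrow> v \<in> bitstrs n \<Longrightarrow> supp n (pauli n v u \<psi>)"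
  by (simp add: pauli_kop kop_supp)

section \<open>Single-qubit Clifford unitaries\<close>

lemma mmul2_assoc: "mmul2 (mmul2 A B) C = mmul2 A (mmul2 B C)"
  by (simp add: mmul2_def UNIV_bool fun_eq_iff algebra_simps)

lemma mmul2_id [simp]: "mmul2 id2 A = A" "mmul2 A id2 = A"
  by (simp_all add: mmul2_def UNIV_bool fun_eq_iff id2_def)

lemma mmul2_smul [simp]:
  "mmul2 (smul2 c A) B = smul2 c (mmul2 A B)" "mmul2 A (smul2 c B) = smul2 c (mmul2 A B)"
  by (simp_all add: mmul2_def smul2_def UNIV_bool fun_eq_iff algebra_simps)

lemma smul2_smul [simp]: "smul2 c (smul2 d A) = smul2 (c * d) A"
  by (simp add: smul2_def fun_eq_iff)

lemma smul2_one [simp]: "smul2 1 A = A" by (simp add: smul2_def)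

lemma unitary2_left:
  assumes "mmul2 U (adj2 U) = id2" shows "mmul2 (adj2 U) U = id2"
proof -
  let ?a = "U False False" and ?b = "U False True" and ?c = "U True False" and ?d = "U True True"
  from assms have "?a * cnj ?a + ?b * cnj ?b = 1" "?a * cnj ?c + ?b * cnj ?d = 0"
    "?c * cnj ?a + ?d * cnj ?b = 0" "?c * cnj ?c + ?d * cnj ?d = 1"
    by (auto simp: mmul2_def adj2_def id2_def UNIV_bool fun_eq_iff
             dest: spec[of _ False] spec[of _ True])
  then have h: "cnj ?a * ?a + cnj ?c * ?c = 1" "cnj ?a * ?b + cnj ?c * ?d = 0"
    "cnj ?b * ?a + cnj ?d * ?c = 0" "cnj ?b * ?b + cnj ?d * ?d = 1"
    by algebra+
  show ?thesis
  proof (intro ext)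
    fix i j
    show "mmul2 (adj2 U) U i j = id2 i j"
      using h by (cases i; cases j) (simp_all add: mmul2_def adj2_def id2_def UNIV_bool)
  qed
qed

lemma left_cancel: "mmul2 (adj2 U) U = id2 \<Longrightarrow> mmul2 U X = mmul2 U Y \<Longrightarrow> X = Y"
  by (metis mmul2_assoc mmul2_id(1))

lemma right_cancel: "mmul2 U (adj2 U) = id2 \<Longrightarrow> mmul2 X U = mmul2 Y U \<Longrightarrow> X = Y"
  by (metis mmul2_assoc mmul2_id(2))

lemma pmat_identity: "pmat False False = id2" by (simp add: pmat_def id2_def fun_eq_iff)

lemma pmat_proportional:
  assumes "pmat a b = smul2 c (pmat a' b')" shows "a = a' \<and> b = b'"
proof -
  have e: "\<And>i j. pmat a b i j = c * pmat a' b' i j" using assms by (simp add: smul2_def fun_eq_iff)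
  show ?thesis using e[of False False] e[of True False] e[of False True] e[of True True]
    by (cases a; cases b; cases a'; cases b') (auto simp: pmat_def)
qed

lemma pmat_nonzero: "pmat a b \<noteq> smul2 0 A"
proof
  assume "pmat a b = smul2 0 A"
  then have e: "\<And>i j. pmat a b i j = 0" by (simp add: smul2_def fun_eq_iff)
  show False using e[of False False] e[of True False] by (cases a) (auto simp: pmat_def)
qed

lemma clifford1_unitary:
  assumes "clifford1 U" shows "mmul2 U (adj2 U) = id2" "mmul2 (adj2 U) U = id2"
  using assms unitary2_left by (auto simp: clifford1_def unitary2_def)

lemma clifford_intertwine:
  assumes "clifford1 U"
  shows "\<exists>a' b' c. c \<noteq> 0 \<and> mmul2 U (pmat a b) = smul2 c (mmul2 (pmat a' b') U)"
proof -
  note uu = clifford1_unitary[OF assms]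
  obtain c a' b' where e: "mmul2 (mmul2 U (pmat a b)) (adj2 U) = smul2 c (pmat a' b')"
    using assms unfolding clifford1_def smul2_def by blast
  have "mmul2 U (pmat a b) = mmul2 (mmul2 (mmul2 U (pmat a b)) (adj2 U)) U"
    by (simp add: mmul2_assoc uu)
  also have "\<dots> = smul2 c (mmul2 (pmat a' b') U)" by (simp add: e)
  finally have e2: "mmul2 U (pmat a b) = smul2 c (mmul2 (pmat a' b') U)" .
  have "c \<noteq> 0"
  proof
    assume "c = 0"
    with e2 have "mmul2 U (pmat a b) = mmul2 U (smul2 0 (pmat a' b'))"
      by (simp add: smul2_def mmul2_def)
    then have "pmat a b = smul2 0 (pmat a' b')" by (rule left_cancel[OF uu(2)])
    with pmat_nonzero show False by blast
  qed
  with e2 show ?thesis by blast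
qed

text \<open>Conversely every Pauli P' arises this way, since P \<mapsto> P' is injective on the
  four Paulis.\<close>
lemma clifford_intertwine_onto:
  assumes "clifford1 U"
  shows "\<exists>a b c. c \<noteq> 0 \<and> mmul2 U (pmat a b) = smul2 c (mmul2 (pmat a' b') U)"
proof -
  note uu = clifford1_unitary[OF assms]
  have "\<forall>p. \<exists>q c. c \<noteq> 0 \<and>
      mmul2 U (pmat (fst p) (snd p)) = smul2 c (mmul2 (pmat (fst q) (snd q)) U)"
    using clifford_intertwine[OF assms] by fastforce
  then obtain g where g: "\<And>p. \<exists>c. c \<noteq> 0 \<and>
      mmul2 U (pmat (fst p) (snd p)) = smul2 c (mmul2 (pmat (fst (g p)) (snd (g p))) U)"
    by metis
  have "inj g"
  proof (rule injI)
    fix p1 p2 assume eq: "g p1 = g p2"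
    obtain c1 where c1: "c1 \<noteq> 0"
      "mmul2 U (pmat (fst p1) (snd p1)) = smul2 c1 (mmul2 (pmat (fst (g p1)) (snd (g p1))) U)"
      using g by blast
    obtain c2 where c2: "c2 \<noteq> 0"
      "mmul2 U (pmat (fst p2) (snd p2)) = smul2 c2 (mmul2 (pmat (fst (g p1)) (snd (g p1))) U)"
      using g eq by metis
    have "mmul2 U (pmat (fst p1) (snd p1)) = smul2 (c1 / c2) (mmul2 U (pmat (fst p2) (snd p2)))"
      using c1 c2 by simp
    then have "mmul2 U (pmat (fst p1) (snd p1)) = mmul2 U (smul2 (c1 / c2) (pmat (fst p2) (snd p2)))"
      by simp
    then have "pmat (fst p1) (snd p1) = smul2 (c1 / c2) (pmat (fst p2) (snd p2))"
      by (rule left_cancel[OF uu(2)])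
    from pmat_proportional[OF this] show "p1 = p2" by (simp add: prod_eq_iff)
  qed
  then have "surj g" by (simp add: finite_UNIV_inj_surj)
  then obtain p where "g p = (a', b')" by (metis surjD)
  then show ?thesis using g[of p] by auto
qed

lemma intertwine_support:
  assumes uu: "mmul2 U (adj2 U) = id2" "mmul2 (adj2 U) U = id2"
    and e: "mmul2 U (pmat a b) = smul2 c (mmul2 (pmat a' b') U)"
  shows "(a \<or> b) = (a' \<or> b')"
proof
  assume ab: "a \<or> b"
  show "a' \<or> b'"
  proof (rule ccontr)
    assume "\<not> (a' \<or> b')"
    with e have "mmul2 U (pmat a b) = mmul2 U (smul2 c (pmat False False))"
      by (simp add: pmat_identity)
    then have "pmat a b = smul2 c (pmat False False)" by (rule left_cancel[OF uu(2)])
    with ab pmat_proportional show False by blast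
  qed
next
  assume ab': "a' \<or> b'"
  show "a \<or> b"
  proof (rule ccontr)
    assume "\<not> (a \<or> b)"
    with e have "mmul2 (pmat False False) U = mmul2 (smul2 c (pmat a' b')) U"
      by (simp add: pmat_identity)
    then have "pmat False False = smul2 c (pmat a' b')" by (rule right_cancel[OF uu(1)])
    with ab' pmat_proportional show False by blast
  qed
qed

section \<open>Local Clifford operators conjugate Paulis to Paulis of equal weight\<close>

lemma local_op_intertwine:
  assumes v: "v \<in> bitstrs n" and v': "v' \<in> bitstrs n"
    and e: "\<And>k. k < n \<Longrightarrow>
      mmul2 (U k) (pmat (v k) (u k)) = smul2 (c k) (mmul2 (pmat (v' k) (u' k)) (U k))"
    and s: "supp n \<psi>"
  shows "local_op n U (pauli n v u \<psi>) = (\<lambda>x. (\<Prod>k<n. c k) * pauli n v' u' (local_op n U \<psi>) x)"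
proof -
  have "local_op n U (pauli n v u \<psi>) = kop n (tens n (\<lambda>k. mmul2 (U k) (pmat (v k) (u k)))) \<psi>"
    by (simp add: local_op_kop pauli_kop[OF s v] kop_comp tens_comp)
  also have "\<dots> = kop n (tens n (\<lambda>k. smul2 (c k) (mmul2 (pmat (v' k) (u' k)) (U k)))) \<psi>"
    by (intro arg_cong[where f="\<lambda>K. kop n K \<psi>"] tens_cong e)
  also have "\<dots> = kop n (\<lambda>x y. (\<Prod>k<n. c k) * tens n (\<lambda>k. mmul2 (pmat (v' k) (u' k)) (U k)) x y) \<psi>"
    by (rule arg_cong[where f="\<lambda>K. kop n K \<psi>"]) (simp add: fun_eq_iff tens_smul)
  also have "\<dots> = (\<lambda>x. (\<Prod>k<n. c k) * kop n (tens n (\<lambda>k. mmul2 (pmat (v' k) (u' k)) (U k))) \<psi> x)"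
    by (rule kop_smul)
  also have "kop n (tens n (\<lambda>k. mmul2 (pmat (v' k) (u' k)) (U k))) \<psi> = pauli n v' u' (local_op n U \<psi>)"
    by (simp add: local_op_kop pauli_kop[OF kop_supp v'] kop_comp tens_comp)
  finally show ?thesis .
qed

lemma local_clifford_pullback:
  assumes cl: "\<forall>k<n. clifford1 (U k)" and v': "v' \<in> bitstrs n" and u': "u' \<in> bitstrs n"
  obtains v u c where "v \<in> bitstrs n" "u \<in> bitstrs n" "pweight n v u = pweight n v' u'" "c \<noteq> 0"
    "\<And>\<psi>. supp n \<psi> \<Longrightarrow> local_op n U (pauli n v u \<psi>) = (\<lambda>x. c * pauli n v' u' (local_op n U \<psi>) x)"
proof -
  have "\<exists>a b c. c \<noteq> 0 \<and>
      mmul2 (U k) (pmat a b) = smul2 c (mmul2 (pmat (v' k) (u' k)) (U k))" if "k < n" for k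
    using clifford_intertwine_onto cl that by blast
  then obtain fa fb fc where f: "\<And>k. k < n \<Longrightarrow> fc k \<noteq> 0 \<and>
      mmul2 (U k) (pmat (fa k) (fb k)) = smul2 (fc k) (mmul2 (pmat (v' k) (u' k)) (U k))"
    by metis
  then have fc: "\<And>k. k < n \<Longrightarrow> fc k \<noteq> 0" by blast
  define v where "v = (\<lambda>k. k < n \<and> fa k)"
  define u where "u = (\<lambda>k. k < n \<and> fb k)"
  have vu: "v \<in> bitstrs n" "u \<in> bitstrs n" by (auto simp: v_def u_def bitstrs_def)
  have e: "mmul2 (U k) (pmat (v k) (u k)) = smul2 (fc k) (mmul2 (pmat (v' k) (u' k)) (U k))"
    if "k < n" for k
    using f that unfolding v_def u_def by simp
  have "(v k \<or> u k) = (v' k \<or> u' k)" if "k < n" for k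
    using intertwine_support[OF clifford1_unitary[OF cl[rule_format, OF that]] e[OF that]] .
  then have "{k. k < n \<and> (v k \<or> u k)} = {k. k < n \<and> (v' k \<or> u' k)}" by blast
  then have "pweight n v u = pweight n v' u'" by (simp add: pweight_def)
  moreover have "(\<Prod>k<n. fc k) \<noteq> 0" using fc by simp
  ultimately show ?thesis
    using that vu local_op_intertwine[OF vu(1) v' e] by blast
qed

section \<open>Qubit permutations\<close>

lemma card_perm:
  assumes "qubit_perm n \<pi>"
  shows "card {k. k < n \<and> P (\<pi> k)} = card {k. k < n \<and> P k}"
proof -
  have b: "bij_betw \<pi> {0..<n} {0..<n}" using assms by (simp add: qubit_perm_def)
  have "{k. k < n \<and> P k} \<subseteq> \<pi> ` {k. k < n \<and> P (\<pi> k)}"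
  proof
    fix j assume j: "j \<in> {k. k < n \<and> P k}"
    then have "j \<in> \<pi> ` {0..<n}" using b by (simp add: bij_betw_def)
    then obtain k where "k \<in> {0..<n}" "j = \<pi> k" by blast
    with j show "j \<in> \<pi> ` {k. k < n \<and> P (\<pi> k)}" by auto
  qed
  moreover have "\<pi> ` {k. k < n \<and> P (\<pi> k)} \<subseteq> {k. k < n \<and> P k}"
    using b by (auto simp: bij_betw_def)
  moreover have "inj_on \<pi> {k. k < n \<and> P (\<pi> k)}"
    using b by (auto simp: bij_betw_def intro: inj_on_subset)
  ultimately show ?thesis by (metis card_image subset_antisym)
qed

lemma bdot_perm: "qubit_perm n \<pi> \<Longrightarrow> bdot n (u \<circ> \<pi>) (y \<circ> \<pi>) = bdot n u y"
  unfolding bdot_def using card_perm[of n \<pi> "\<lambda>k. u k \<and> y k"] by simp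

lemma pweight_perm: "qubit_perm n \<pi> \<Longrightarrow> pweight n (v \<circ> \<pi>) (u \<circ> \<pi>) = pweight n v u"
  unfolding pweight_def using card_perm[of n \<pi> "\<lambda>k. v k \<or> u k"] by simp

lemma comp_perm_in: "qubit_perm n \<pi> \<Longrightarrow> x \<in> bitstrs n \<Longrightarrow> x \<circ> \<pi> \<in> bitstrs n"
  by (simp add: qubit_perm_def bitstrs_def)

lemma comp_perm_notin: "qubit_perm n \<pi> \<Longrightarrow> x \<notin> bitstrs n \<Longrightarrow> x \<circ> \<pi> \<notin> bitstrs n"
  by (auto simp: qubit_perm_def bitstrs_def)

lemma perm_supp: "qubit_perm n \<pi> \<Longrightarrow> supp n \<psi> \<Longrightarrow> supp n (perm_state \<pi> \<psi>)"
  by (simp add: supp_def perm_state_def comp_perm_notin)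

lemma perm_inverse:
  assumes "qubit_perm n \<pi>"
  obtains \<rho> where "\<And>k. \<pi> (\<rho> k) = k" "\<And>k. \<rho> (\<pi> k) = k" "\<And>k. k \<ge> n \<Longrightarrow> \<rho> k = k"
proof -
  have b: "bij_betw \<pi> {0..<n} {0..<n}" and fix_high: "\<And>k. k \<ge> n \<Longrightarrow> \<pi> k = k"
    using assms by (simp_all add: qubit_perm_def)
  define \<rho> where "\<rho> = (\<lambda>k. if k < n then inv_into {0..<n} \<pi> k else k)"
  have "\<pi> (\<rho> k) = k" for k
  proof (cases "k < n")
    case True
    then have "k \<in> \<pi> ` {0..<n}" using b by (simp add: bij_betw_def)
    then show ?thesis using True by (simp add: \<rho>_def f_inv_into_f)
  qed (simp add: \<rho>_def fix_high)
  moreover have "\<rho> (\<pi> k) = k" for k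
  proof (cases "k < n")
    case True
    then have "\<pi> k < n" using b by (auto simp: bij_betw_def)
    then show ?thesis using True b by (simp add: \<rho>_def bij_betw_def inv_into_f_f)
  qed (simp add: \<rho>_def fix_high)
  moreover have "\<rho> k = k" if "k \<ge> n" for k using that by (simp add: \<rho>_def)
  ultimately show ?thesis using that by blast
qed

lemma perm_isometry:
  assumes p: "qubit_perm n \<pi>"
  shows "qinner n (perm_state \<pi> \<phi>) (perm_state \<pi> \<psi>) = qinner n \<phi> \<psi>"
proof -
  obtain \<rho> where r: "\<And>k. \<pi> (\<rho> k) = k" "\<And>k. \<rho> (\<pi> k) = k" "\<And>k. k \<ge> n \<Longrightarrow> \<rho> k = k"
    using perm_inverse[OF p] by blast
  show ?thesis unfolding qinner_def perm_state_def
  proof (rule sum.reindex_bij_witness[where j="\<lambda>x. x \<circ> \<pi>" and i="\<lambda>y. y \<circ> \<rho>"])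
    show "\<And>a. a \<in> bitstrs n \<Longrightarrow> a \<circ> \<pi> \<in> bitstrs n" using p by (rule comp_perm_in)
    show "\<And>b. b \<in> bitstrs n \<Longrightarrow> b \<circ> \<rho> \<in> bitstrs n" by (simp add: bitstrs_def r)
  qed (simp_all add: fun_eq_iff r)
qed

lemma perm_pauli:
  assumes "qubit_perm n \<pi>"
  shows "perm_state \<pi> (pauli n (v \<circ> \<pi>) (u \<circ> \<pi>) \<psi>) = pauli n v u (perm_state \<pi> \<psi>)"
proof -
  have "bxor (x \<circ> \<pi>) (v \<circ> \<pi>) = bxor x v \<circ> \<pi>" for x by (simp add: bxor_def fun_eq_iff)
  then show ?thesis
    unfolding perm_state_def pauli_def by (simp add: bdot_perm[OF assms])
qed

section \<open>LC-equivalence and the distance\<close>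

lemma lc_isometry:
  assumes "qubit_perm n \<pi>" "\<forall>k<n. clifford1 (U k)" "supp n \<psi>"
  shows "qinner n (local_op n U (perm_state \<pi> \<phi>)) (local_op n U (perm_state \<pi> \<psi>)) = qinner n \<phi> \<psi>"
  using assms clifford1_unitary(2)
  by (simp add: local_op_isometry perm_supp perm_isometry)

lemma lc_nondetectable_pullback:
  assumes p: "qubit_perm n \<pi>" and cl: "\<forall>k<n. clifford1 (U k)"
    and v': "v' \<in> bitstrs n" and u': "u' \<in> bitstrs n"
    and Qs: "\<And>\<psi>. \<psi> \<in> Q \<Longrightarrow> supp n \<psi>"
    and nd: "\<not> detectable n ((\<lambda>\<psi>. local_op n U (perm_state \<pi> \<psi>)) ` Q) (pauli n v' u')"
  obtains v u where "v \<in> bitstrs n" "u \<in> bitstrs n" "pweight n v u = pweight n v' u'"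
    "\<not> detectable n Q (pauli n v u)"
proof -
  define V where "V = (\<lambda>\<psi>. local_op n U (perm_state \<pi> \<psi>))"
  obtain v1 u1 c where v1: "v1 \<in> bitstrs n" and u1: "u1 \<in> bitstrs n"
    and w1: "pweight n v1 u1 = pweight n v' u'" and c: "c \<noteq> 0"
    and L: "\<And>\<psi>. supp n \<psi> \<Longrightarrow>
      local_op n U (pauli n v1 u1 \<psi>) = (\<lambda>x. c * pauli n v' u' (local_op n U \<psi>) x)"
    using local_clifford_pullback[OF cl v' u'] by blast
  let ?P = "pauli n (v1 \<circ> \<pi>) (u1 \<circ> \<pi>)"
  have VP: "pauli n v' u' (V \<psi>) = (\<lambda>x. (1 / c) * V (?P \<psi>) x)" if "supp n \<psi>" for \<psi>
    using c by (simp add: V_def perm_pauli[OF p] L[OF perm_supp[OF p that]])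
  have "\<not> detectable n Q ?P"
  proof
    assume "detectable n Q ?P"
    then obtain C0 where C0: "\<And>\<phi> \<psi>. \<phi> \<in> Q \<Longrightarrow> \<psi> \<in> Q \<Longrightarrow>
        qinner n \<phi> (?P \<psi>) = C0 * qinner n \<phi> \<psi>"
      by (auto simp: detectable_def)
    have "qinner n (V \<phi>) (pauli n v' u' (V \<psi>)) = (C0 / c) * qinner n (V \<phi>) (V \<psi>)"
      if ph: "\<phi> \<in> Q" and ps: "\<psi> \<in> Q" for \<phi> \<psi>
    proof -
      have sps: "supp n \<psi>" using Qs ps by blast
      have sP: "supp n (?P \<psi>)" by (rule pauli_supp[OF sps comp_perm_in[OF p v1]])
      have "qinner n (V \<phi>) (pauli n v' u' (V \<psi>)) = (1 / c) * qinner n (V \<phi>) (V (?P \<psi>))"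
        by (simp only: VP[OF sps] qinner_smul_right)
      also have "\<dots> = (1 / c) * (C0 * qinner n \<phi> \<psi>)"
        by (simp add: V_def lc_isometry[OF p cl sP] C0[OF ph ps])
      also have "\<dots> = (C0 / c) * qinner n (V \<phi>) (V \<psi>)"
        by (simp add: V_def lc_isometry[OF p cl sps])
      finally show ?thesis .
    qed
    then have "detectable n (V ` Q) (pauli n v' u')"
      unfolding detectable_def by blast
    with nd show False by (simp add: V_def)
  qed
  with that comp_perm_in[OF p v1] comp_perm_in[OF p u1] show ?thesis
    using w1 pweight_perm[OF p] by metis
qed

lemma qdistance_le_lc_nondetectable:
  assumes lc: "lc_equiv n Q Q'" and Qs: "\<And>\<psi>. \<psi> \<in> Q \<Longrightarrow> supp n \<psi>"
    and v': "v' \<in> bitstrs n" and u': "u' \<in> bitstrs n"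
    and nd: "\<not> detectable n Q' (pauli n v' u')"
  shows "qdistance n Q \<le> pweight n v' u'"
proof -
  obtain \<pi> U where p: "qubit_perm n \<pi>" and cl: "\<forall>k<n. clifford1 (U k)"
    and Q': "Q' = (\<lambda>\<psi>. local_op n U (perm_state \<pi> \<psi>)) ` Q"
    using lc unfolding lc_equiv_def by blast
  obtain v u where "v \<in> bitstrs n" "u \<in> bitstrs n" "pweight n v u = pweight n v' u'"
    "\<not> detectable n Q (pauli n v u)"
    using lc_nondetectable_pullback[OF p cl v' u' Qs] nd Q' by blast
  then show ?thesis unfolding qdistance_def by (intro Least_le) blast
qed

section \<open>Graph states and CWS codes\<close>

lemma pauli_Z_apply: "pauli n zerov c s x = (-1) ^ bdot n c x * s x"
  by (simp add: pauli_def)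

lemma graph_state_flip:
  assumes g: "is_graph_state n R s" and i: "i < n"
  shows "s x = (-1) ^ bdot n (adjrow n R i) (bxor x (unitv i)) * s (bxor x (unitv i))"
proof -
  have "graph_stab n R i s x = s x" using g i by (simp add: is_graph_state_def)
  then show ?thesis by (simp add: graph_stab_def pauli_def)
qed

lemma graph_state_flip_norm:
  assumes g: "is_graph_state n R s" and i: "i < n"
  shows "cnj (s (bxor x (unitv i))) * s (bxor x (unitv i)) = cnj (s x) * s x"
proof -
  let ?y = "bxor x (unitv i)" and ?k = "bdot n (adjrow n R i) (bxor x (unitv i))"
  have "cnj (s x) * s x = ((-1) ^ ?k * (-1) ^ ?k) * (cnj (s ?y) * s ?y)"
    by (subst (1 2) graph_state_flip[OF g i]) (simp add: mult_ac)
  then show ?thesis by (simp add: sign_square)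
qed

text \<open>The probability distribution of a graph state is invariant under single bit flips,
  so every nontrivial character averages to zero against it.\<close>
lemma graph_state_character_sum:
  assumes g: "is_graph_state n R s" and w: "w \<in> bitstrs n" "w \<noteq> zerov"
  shows "(\<Sum>x\<in>bitstrs n. (-1) ^ bdot n w x * (cnj (s x) * s x)) = 0"
proof -
  obtain i where wi: "w i" using w(2) by (auto simp: zerov_def fun_eq_iff)
  then have i: "i < n" using w(1) by (auto simp: bitstrs_def) (meson not_less)
  define f where "f = (\<lambda>x. (-1::complex) ^ bdot n w x * (cnj (s x) * s x))"
  have "sum f (bitstrs n) = (\<Sum>x\<in>bitstrs n. f (bxor x (unitv i)))"
    by (rule sum.reindex_bij_witness[where j="\<lambda>x. bxor x (unitv i)" and i="\<lambda>x. bxor x (unitv i)"])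
       (simp_all add: bxor_in unitv_in[OF i])
  also have "\<dots> = (\<Sum>x\<in>bitstrs n. - f x)"
    by (rule sum.cong)
       (simp_all add: f_def sign_bdot_bxor_right sign_bdot_unitv[OF i] wi graph_state_flip_norm[OF g i])
  finally have "sum f (bitstrs n) = - sum f (bitstrs n)" by (simp add: sum_negf)
  then show ?thesis unfolding f_def by simp
qed

lemma graph_state_Z_inner:
  assumes g: "is_graph_state n R s" and c: "c \<in> bitstrs n" "c' \<in> bitstrs n"
  shows "qinner n (pauli n zerov c s) (pauli n zerov c' s) = (if c = c' then qinner n s s else 0)"
proof -
  have "qinner n (pauli n zerov c s) (pauli n zerov c' s) =
      (\<Sum>x\<in>bitstrs n. (-1) ^ bdot n (bxor c c') x * (cnj (s x) * s x))"
    unfolding qinner_def pauli_Z_apply by (rule sum.cong) (simp_all add: sign_bdot_bxor_left mult_ac)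
  also have "\<dots> = (if c = c' then qinner n s s else 0)"
  proof (cases "c = c'")
    case True
    have "bxor c c = zerov" by (simp add: bxor_def zerov_def)
    then show ?thesis using True by (simp add: qinner_def bdot_def zerov_def)
  next
    case False
    then have "bxor c c' \<noteq> zerov" by (auto simp: bxor_def zerov_def fun_eq_iff)
    with False show ?thesis using graph_state_character_sum[OF g bxor_in[OF c]] by simp
  qed
  finally show ?thesis .
qed

lemma graph_state_norm_nonzero:
  assumes g: "is_graph_state n R s"
  shows "qinner n s s \<noteq> 0"
proof -
  obtain x0 where x0: "s x0 \<noteq> 0" using g by (auto simp: is_graph_state_def)
  then have x0B: "x0 \<in> bitstrs n" using g by (auto simp: is_graph_state_def)
  have "qinner n s s = of_real (\<Sum>x\<in>bitstrs n. (norm (s x))\<^sup>2)"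
    unfolding qinner_def of_real_sum complex_norm_square by (simp add: mult.commute)
  moreover have "(\<Sum>x\<in>bitstrs n. (norm (s x))\<^sup>2) > 0"
    by (rule sum_pos2[OF finite_bitstrs x0B]) (simp_all add: x0)
  ultimately show ?thesis by (metis less_irrefl of_real_eq_0_iff)
qed

lemma graph_stab_Z_eigen:
  assumes g: "is_graph_state n R s" and i: "i < n"
  shows "graph_stab n R i (pauli n zerov c s) = (\<lambda>x. (if c i then -1 else 1) * pauli n zerov c s x)"
proof
  fix x
  let ?y = "bxor x (unitv i)"
  have "graph_stab n R i (pauli n zerov c s) x =
      (-1) ^ bdot n c ?y * ((-1) ^ bdot n (adjrow n R i) ?y * s ?y)"
    by (simp add: graph_stab_def pauli_def mult_ac)
  also have "\<dots> = (-1) ^ bdot n c ?y * s x" by (simp flip: graph_state_flip[OF g i])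
  also have "\<dots> = (if c i then -1 else 1) * pauli n zerov c s x"
    by (simp add: pauli_Z_apply sign_bdot_bxor_right sign_bdot_unitv[OF i])
  finally show "graph_stab n R i (pauli n zerov c s) x = (if c i then -1 else 1) * pauli n zerov c s x" .
qed

lemma Z_in_cws_code:
  assumes "finite C" "c \<in> C" shows "pauli n zerov c s \<in> cws_code n s C"
proof -
  have "(\<Sum>c'\<in>C. (if c' = c then 1 else 0) * pauli n zerov c' s x) =
      (\<Sum>c'\<in>C. if c' = c then pauli n zerov c' s x else 0)" for x
    by (rule sum.cong) auto
  then have "(\<Sum>c'\<in>C. (if c' = c then 1 else 0) * pauli n zerov c' s x) = pauli n zerov c s x" for x
    using assms by simp
  then show ?thesis unfolding cws_code_def
    by (intro CollectI exI[where x="\<lambda>c'. if c' = c then 1 else 0"]) (simp add: fun_eq_iff)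
qed

lemma cws_code_supp: "is_graph_state n R s \<Longrightarrow> \<psi> \<in> cws_code n s C \<Longrightarrow> supp n \<psi>"
  by (auto simp: cws_code_def supp_def pauli_Z_apply is_graph_state_def)

text \<open>A code spanned by at most one vector contains no two orthogonal non-null vectors;
  hence a CWS code with such a pair has two distinct codewords.\<close>
lemma cws_code_two_words:
  assumes \<phi>: "\<phi>1 \<in> cws_code n s C" "\<phi>2 \<in> cws_code n s C"
    and nonnull: "qinner n \<phi>1 \<phi>1 \<noteq> 0" "qinner n \<phi>2 \<phi>2 \<noteq> 0"
    and orth: "qinner n \<phi>1 \<phi>2 = 0"
  obtains c1 c2 where "c1 \<in> C" "c2 \<in> C" "c1 \<noteq> c2"
proof -
  have "\<exists>c1\<in>C. \<exists>c2\<in>C. c1 \<noteq> c2"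
  proof (rule ccontr)
    assume single: "\<not> (\<exists>c1\<in>C. \<exists>c2\<in>C. c1 \<noteq> c2)"
    define c0 where "c0 = (SOME c. c \<in> C)"
    have sub: "C \<subseteq> {c0}"
    proof
      fix c assume c: "c \<in> C"
      then have "c0 \<in> C" unfolding c0_def by (rule someI[where P="\<lambda>c. c \<in> C"])
      with c single show "c \<in> {c0}" by blast
    qed
    define w where "w = pauli n zerov c0 s"
    have multiple: "\<exists>b. \<psi> = (\<lambda>x. b * w x)" if "\<psi> \<in> cws_code n s C" for \<psi>
    proof -
      from that obtain a where a: "\<psi> = (\<lambda>x. \<Sum>c\<in>C. a c * pauli n zerov c s x)"
        by (auto simp: cws_code_def)
      from sub consider "C = {}" | "C = {c0}" by blast
      then show ?thesis
      proof cases
        case 1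
        then show ?thesis using a by (intro exI[where x=0]) simp
      next
        case 2
        then show ?thesis using a by (intro exI[where x="a c0"]) (simp add: w_def)
      qed
    qed
    obtain b1 b2 where b: "\<phi>1 = (\<lambda>x. b1 * w x)" "\<phi>2 = (\<lambda>x. b2 * w x)"
      using multiple[OF \<phi>(1)] multiple[OF \<phi>(2)] by blast
    have "qinner n \<phi>1 \<phi>2 = cnj b1 * (b2 * qinner n w w)"
      "qinner n \<phi>1 \<phi>1 = cnj b1 * (b1 * qinner n w w)"
      "qinner n \<phi>2 \<phi>2 = cnj b2 * (b2 * qinner n w w)"
      unfolding b by (simp_all only: qinner_smul_left qinner_smul_right)
    with nonnull orth show False by simp
  qed
  with that show ?thesis by blast
qed

lemma lc_cws_two_words:
  assumes lc: "lc_equiv n (cws_code n s C) (cws_code n s' C')"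
    and g: "is_graph_state n R s" and CB: "C \<subseteq> bitstrs n" and K: "card C \<ge> 2"
  obtains c1 c2 where "c1 \<in> C'" "c2 \<in> C'" "c1 \<noteq> c2"
proof -
  obtain \<pi> U where p: "qubit_perm n \<pi>" and cl: "\<forall>k<n. clifford1 (U k)"
    and Q': "cws_code n s' C' = (\<lambda>\<psi>. local_op n U (perm_state \<pi> \<psi>)) ` cws_code n s C"
    using lc unfolding lc_equiv_def by blast
  define V where "V = (\<lambda>\<psi>. local_op n U (perm_state \<pi> \<psi>))"
  have "\<not> card C \<le> Suc 0" using K by simp
  moreover have finC: "finite C" using CB finite_bitstrs finite_subset by blast
  ultimately obtain a1 a2 where a: "a1 \<in> C" "a2 \<in> C" "a1 \<noteq> a2"
    by (auto simp: card_le_Suc0_iff_eq)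
  have aB: "a1 \<in> bitstrs n" "a2 \<in> bitstrs n" using a CB by auto
  let ?z = "\<lambda>a. pauli n zerov a s"
  have z: "?z a1 \<in> cws_code n s C" "?z a2 \<in> cws_code n s C"
    using Z_in_cws_code[OF finC] a by auto
  have inner: "qinner n (V (?z ai)) (V (?z aj)) = (if ai = aj then qinner n s s else 0)"
    if "ai \<in> bitstrs n" "aj \<in> bitstrs n" "?z aj \<in> cws_code n s C" for ai aj
    unfolding V_def using that
    by (simp add: lc_isometry[OF p cl cws_code_supp[OF g]] graph_state_Z_inner[OF g])
  have "V (?z a1) \<in> cws_code n s' C'" "V (?z a2) \<in> cws_code n s' C'"
    using z by (simp_all add: Q' V_def)
  then show ?thesis
    using that cws_code_two_words[of "V (?z a1)" n s' C' "V (?z a2)"]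
    using inner[OF aB(1) aB(1) z(1)] inner[OF aB(2) aB(2) z(2)] inner[OF aB(1) aB(2) z(2)] a(3)
      graph_state_norm_nonzero[OF g]
    by auto
qed

text \<open>If S_i is detectable on a CWS code, all codewords agree in bit i, because the
  eigenvalue (-1)^(c_i) of S_i on Z^c|s> must be the constant C_E.\<close>
lemma cws_detectable_stab_agree:
  assumes g: "is_graph_state n R s" and CB: "C \<subseteq> bitstrs n" and i: "i < n"
    and c: "c1 \<in> C" "c2 \<in> C" and det: "detectable n (cws_code n s C) (graph_stab n R i)"
  shows "c1 i = c2 i"
proof -
  have finC: "finite C" using CB finite_bitstrs finite_subset by blast
  obtain E where E: "\<And>\<phi> \<psi>. \<phi> \<in> cws_code n s C \<Longrightarrow> \<psi> \<in> cws_code n s C \<Longrightarrow>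
      qinner n \<phi> (graph_stab n R i \<psi>) = E * qinner n \<phi> \<psi>"
    using det by (auto simp: detectable_def)
  have eigen: "E = (if c i then -1 else 1)" if "c \<in> C" for c
  proof -
    have cB: "c \<in> bitstrs n" using that CB by auto
    have zc: "pauli n zerov c s \<in> cws_code n s C" using Z_in_cws_code[OF finC that] .
    have "(if c i then -1 else 1) * qinner n s s = E * qinner n s s"
      using E[OF zc zc]
      by (simp add: graph_stab_Z_eigen[OF g i] qinner_smul_right graph_state_Z_inner[OF g cB cB])
    with graph_state_norm_nonzero[OF g] show ?thesis by simp
  qed
  from eigen[OF c(1)] eigen[OF c(2)] show ?thesis by (auto split: if_splits)
qed

text \<open>Z^(c1+c2) maps the codeword Z^c1|s> to the orthogonal codeword Z^c2|s>, so it is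
  not detectable.\<close>
lemma cws_word_difference_not_detectable:
  assumes g: "is_graph_state n R s" and CB: "C \<subseteq> bitstrs n"
    and c: "c1 \<in> C" "c2 \<in> C" "c1 \<noteq> c2"
  shows "\<not> detectable n (cws_code n s C) (pauli n zerov (bxor c1 c2))"
proof
  assume "detectable n (cws_code n s C) (pauli n zerov (bxor c1 c2))"
  then obtain E where E: "\<And>\<phi> \<psi>. \<phi> \<in> cws_code n s C \<Longrightarrow> \<psi> \<in> cws_code n s C \<Longrightarrow>
      qinner n \<phi> (pauli n zerov (bxor c1 c2) \<psi>) = E * qinner n \<phi> \<psi>"
    by (auto simp: detectable_def)
  have finC: "finite C" using CB finite_bitstrs finite_subset by blast
  have cB: "c1 \<in> bitstrs n" "c2 \<in> bitstrs n" using c CB by auto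
  have z: "pauli n zerov c1 s \<in> cws_code n s C" "pauli n zerov c2 s \<in> cws_code n s C"
    using Z_in_cws_code[OF finC] c by auto
  have move: "pauli n zerov (bxor c1 c2) (pauli n zerov c1 s) = pauli n zerov c2 s"
  proof
    fix x
    have "(-1::complex) ^ bdot n (bxor c1 c2) x * ((-1) ^ bdot n c1 x * s x) =
        ((-1) ^ bdot n c1 x * (-1) ^ bdot n c1 x) * ((-1) ^ bdot n c2 x * s x)"
      by (simp add: sign_bdot_bxor_left mult_ac)
    then show "pauli n zerov (bxor c1 c2) (pauli n zerov c1 s) x = pauli n zerov c2 s x"
      by (simp add: pauli_Z_apply sign_square)
  qed
  have "qinner n s s = 0"
    using E[OF z(2) z(1)] c(3)
    by (simp add: move graph_state_Z_inner[OF g cB(2) cB(2)] graph_state_Z_inner[OF g cB(2) cB(1)])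
  with graph_state_norm_nonzero[OF g] show False by simp
qed

section \<open>The counting bound\<close>

text \<open>With two distinct codewords c1, c2 of an LC-equivalent code, the distance d is at most
  the number of generators S'_i of weight at least d: generators of smaller weight are
  detectable, so c1 and c2 agree there, while Z^(c1+c2) is not detectable.\<close>
lemma distance_le_heavy_generators:
  assumes lc: "lc_equiv n Q (cws_code n s' C')" and Qs: "\<And>\<psi>. \<psi> \<in> Q \<Longrightarrow> supp n \<psi>"
    and g': "is_graph_state n R' s'" and CB: "C' \<subseteq> bitstrs n"
    and c: "c1 \<in> C'" "c2 \<in> C'" "c1 \<noteq> c2"
  shows "qdistance n Q \<le> card {i. i < n \<and> qdistance n Q \<le> pweight n (unitv i) (adjrow n R' i)}"
    (is "?d \<le> card ?T")
proof -
  have agree: "c1 i = c2 i" if i: "i < n" and light: "i \<notin> ?T" for i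
  proof -
    have "detectable n (cws_code n s' C') (graph_stab n R' i)"
      using qdistance_le_lc_nondetectable[OF lc Qs unitv_in[OF i] adjrow_in] light i
      unfolding graph_stab_def by fastforce
    then show ?thesis using cws_detectable_stab_agree[OF g' CB i c(1,2)] by blast
  qed
  have "bxor c1 c2 \<in> bitstrs n" using c CB by (intro bxor_in) auto
  then have "?d \<le> pweight n zerov (bxor c1 c2)"
    using qdistance_le_lc_nondetectable[OF lc Qs zerov_in]
      cws_word_difference_not_detectable[OF g' CB c] by blast
  also have "\<dots> \<le> card ?T"
  proof -
    have "{k. k < n \<and> (zerov k \<or> bxor c1 c2 k)} \<subseteq> ?T"
      using agree by (auto simp: zerov_def bxor_def)
    then show ?thesis unfolding pweight_def[of n zerov] by (intro card_mono) auto
  qed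
  finally show ?thesis .
qed

lemma le_kth_largest:
  assumes d1: "d \<ge> 1" and many: "d \<le> card {i. i < length ws \<and> d \<le> ws ! i}"
  shows "d \<le> kth_largest ws d"
proof -
  define xs where "xs = sort ws"
  define m where "m = length ws"
  have lx: "length xs = m" by (simp add: xs_def m_def)
  have "card {i. i < length ws \<and> d \<le> ws ! i} = length (filter (\<lambda>w. d \<le> w) ws)"
    by (simp add: length_filter_conv_card)
  also have "\<dots> = length (filter (\<lambda>w. d \<le> w) xs)" by (simp add: xs_def filter_sort)
  also have "\<dots> = card {i. i < m \<and> d \<le> xs ! i}" by (simp add: length_filter_conv_card lx)
  finally have cx: "d \<le> card {i. i < m \<and> d \<le> xs ! i}" using many by simp
  have "card {i. i < m \<and> d \<le> xs ! i} \<le> card {..<m}" by (rule card_mono) auto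
  then have dm: "d \<le> m" using cx by simp
  have kth: "kth_largest ws d = xs ! (m - d)"
    using dm d1 by (simp add: kth_largest_def xs_def m_def rev_nth Suc_diff_le)
  show ?thesis
  proof (rule ccontr)
    assume "\<not> d \<le> kth_largest ws d"
    then have small: "xs ! (m - d) < d" by (simp add: kth)
    have "{i. i < m \<and> d \<le> xs ! i} \<subseteq> {m - d + 1..<m}"
    proof
      fix i assume i: "i \<in> {i. i < m \<and> d \<le> xs ! i}"
      have "\<not> i \<le> m - d"
      proof
        assume "i \<le> m - d"
        then have "xs ! i \<le> xs ! (m - d)" using sorted_nth_mono[of xs i "m - d"] dm d1 lx
          by (simp add: xs_def)
        with i small show False by simp
      qed
      with i show "i \<in> {m - d + 1..<m}" by simp
    qed
    then have "card {i. i < m \<and> d \<le> xs ! i} \<le> card {m - d + 1..<m}" by (rule card_mono[rotated]) simp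
    with cx dm d1 show False by simp
  qed
qed

theorem theorem3:
  fixes n :: nat and R R' :: "nat \<Rightarrow> nat \<Rightarrow> bool" and s s' :: state and C C' :: "bits set"
  assumes "simple_graph n R" and "is_graph_state n R s"
    and "C \<subseteq> bitstrs n" and "card C \<ge> 2"
    and "simple_graph n R'" and "is_graph_state n R' s'"
    and "C' \<subseteq> bitstrs n"
    and "lc_equiv n (cws_code n s C) (cws_code n s' C')"
  shows "qdistance n (cws_code n s C) \<le>
    kth_largest (map (\<lambda>i. pweight n (unitv i) (adjrow n R' i)) [0..<n])
                (qdistance n (cws_code n s C))"
proof -
  let ?d = "qdistance n (cws_code n s C)" and ?wt = "\<lambda>i. pweight n (unitv i) (adjrow n R' i)"
  obtain c1 c2 where c: "c1 \<in> C'" "c2 \<in> C'" "c1 \<noteq> c2"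
    using lc_cws_two_words[OF assms(8,2,3,4)] .
  have "?d \<le> card {i. i < n \<and> ?d \<le> ?wt i}"
    using distance_le_heavy_generators[OF assms(8) cws_code_supp[OF assms(2)] assms(6,7) c] .
  moreover have "{i. i < length (map ?wt [0..<n]) \<and> ?d \<le> map ?wt [0..<n] ! i} =
      {i. i < n \<and> ?d \<le> ?wt i}"
    by auto
  ultimately show ?thesis
    using le_kth_largest[of ?d "map ?wt [0..<n]"] by (cases "?d = 0") simp_all
qed

end
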